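(* Let $M,N\in\mathbb{S}^{q+r}$ with $N\in\boldsymbol{\Pi}_{q,r}$. (a) Assume $N$ has at least one positive eigenvalue. Then $\mathcal{Z}_r(N)\subseteq\mathcal{Z}_r(M)$ if and only if $x^\top Mx\ge 0$ for all $x\in\mathbb{R}^{q+r}$ satisfying $x^\top Nx\ge 0$. (b) Assume $N_{22}<0$. Then $\mathcal{Z}_r(N)\subseteq\mathcal{Z}_r^+(M)$ if and only if $x^\top Mx>0$ for all nonzero $x\in\mathbb{R}^{q+r}$ satisfying $x^\top Nx\ge 0$.
   Context: $\mathbb{S}^k$ denotes the real symmetric $k\times k$ matrices; for symmetric matrices, $A\ge 0$ ($A>0$) means positive semidefinite (definite), $A<0$ negative definite. $A^\dagger$ is the Moore–Penrose pseudo-inverse. Any $N\in\mathbb{S}^{q+r}$ is partitioned as $N=\begin{bmatrix}N_{11}&N_{12}\\ N_{21}&N_{22}\end{bmatrix}$ with $N_{11}\in\mathbb{S}^q$, $N_{22}\in\mathbb{S}^r$ (same for $M$). The generalized Schur complement is $N\mid N_{22}:=N_{11}-N_{12}N_{22}^\dagger N_{21}$. The set $\boldsymbol{\Pi}_{q,r}$ consists of all $N\in\mathbb{S}^{q+r}$ with $N_{22}\le 0$, $N\mid N_{22}\ge 0$ and $\ker N_{22}\subseteq\ker N_{12}$. Define $\mathcal{Z}_r(\Pi)=\{Z\in\mathbb{R}^{r\times q}:\begin{bmatrix}I_q\\ Z\end{bmatrix}^\top\Pi\begin{bmatrix}I_q\\ Z\end{bmatrix}\ge 0\}$ and $\mathcal{Z}_r^+(\Pi)$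 the same with $>0$. *)

theory Defs
  imports "HOL-Analysis.Analysis"
begin

text \<open>Matrices in S^{q+r} are represented as real^('q+'r)^('q+'r), the index type being
  the disjoint sum of the index types of the two blocks (Inl = first q, Inr = last r).\<close>

definition sym_mat :: "real^'n^'n \<Rightarrow> bool" where
  "sym_mat A \<longleftrightarrow> transpose A = A"

definition psd :: "real^'n^'n \<Rightarrow> bool" where
  "psd A \<longleftrightarrow> (\<forall>x. 0 \<le> x \<bullet> (A *v x))"

definition pd :: "real^'n^'n \<Rightarrow> bool" where
  "pd A \<longleftrightarrow> (\<forall>x. x \<noteq> 0 \<longrightarrow> 0 < x \<bullet> (A *v x))"

definition nsd :: "real^'n^'n \<Rightarrow> bool" where
  "nsd A \<longleftrightarrow> (\<forall>x. x \<bullet> (A *v x) \<le> 0)"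

definition nd :: "real^'n^'n \<Rightarrow> bool" where
  "nd A \<longleftrightarrow> (\<forall>x. x \<noteq> 0 \<longrightarrow> x \<bullet> (A *v x) < 0)"

definition pinv :: "real^'n^'m \<Rightarrow> real^'m^'n" where
  "pinv A = (THE X. A ** X ** A = A \<and> X ** A ** X = X \<and>
                    transpose (A ** X) = A ** X \<and> transpose (X ** A) = X ** A)"

definition blk11 :: "real^('q::finite+'r::finite)^('q+'r) \<Rightarrow> real^'q^'q" where
  "blk11 N = (\<chi> i j. N $ Inl i $ Inl j)"
definition blk12 :: "real^('q::finite+'r::finite)^('q+'r) \<Rightarrow> real^'r^'q" where
  "blk12 N = (\<chi> i j. N $ Inl i $ Inr j)"
definition blk21 :: "real^('q::finite+'r::finite)^('q+'r) \<Rightarrow> real^'q^'r" where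
  "blk21 N = (\<chi> i j. N $ Inr i $ Inl j)"
definition blk22 :: "real^('q::finite+'r::finite)^('q+'r) \<Rightarrow> real^'r^'r" where
  "blk22 N = (\<chi> i j. N $ Inr i $ Inr j)"

definition schur :: "real^('q::finite+'r::finite)^('q+'r) \<Rightarrow> real^'q^'q" where
  "schur N = blk11 N - blk12 N ** pinv (blk22 N) ** blk21 N"

definition Pi_set :: "(real^('q::finite+'r::finite)^('q+'r)) set" where
  "Pi_set = {N. sym_mat N \<and> nsd (blk22 N) \<and> psd (schur N) \<and>
                {x. blk22 N *v x = 0} \<subseteq> {x. blk12 N *v x = 0}}"

text \<open>The (q+r) x q matrix [I_q; Z].\<close>
definition stackI :: "real^'q^'r \<Rightarrow> real^'q^('q+'r)" where
  "stackI Z = (\<chi> k j. case k of Inl i \<Rightarrow> (if i = j then 1 else 0) | Inr i \<Rightarrow> Z $ i $ j)"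

definition Zset :: "real^('q::finite+'r::finite)^('q+'r) \<Rightarrow> (real^'q^'r) set" where
  "Zset P = {Z. psd (transpose (stackI Z) ** P ** stackI Z)}"

definition Zset_pos :: "real^('q::finite+'r::finite)^('q+'r) \<Rightarrow> (real^'q^'r) set" where
  "Zset_pos P = {Z. pd (transpose (stackI Z) ** P ** stackI Z)}"

definition has_pos_eigenvalue :: "real^'n^'n \<Rightarrow> bool" where
  "has_pos_eigenvalue A \<longleftrightarrow> (\<exists>c v. 0 < c \<and> v \<noteq> 0 \<and> A *v v = c *\<^sub>R v)"

end

theory Submission
  imports Defs
begin

text \<open>Write x = (a, b) with a in R^q. The conditions defining Pi_set allow completing the square,
  x' N x = a' S a + (b + pinv N22 N21 a)' N22 (b + pinv N22 N21 a) with S = N | N22 \<ge> 0 and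
  N22 \<le> 0. Consequently every x with a \<noteq> 0 in the cone x' N x \<ge> 0 lies on the graph b = Z a of
  some Z in Z_r(N): take Z to be -pinv N22 N21 plus a rank-one correction, whose negative
  contribution S absorbs by the Cauchy--Schwarz inequality. This turns inclusions of the
  Z-sets into the quadratic-form implications; the converses are immediate. Vectors with a = 0
  are either excluded (N22 < 0) or lie in the null space of N, where they are limits of cone
  vectors with a \<noteq> 0 obtained by moving along an eigenvector of a positive eigenvalue.\<close>

abbreviation qf :: "real^'n^'n \<Rightarrow> real^'n \<Rightarrow> real" where
  "qf A x \<equiv> x \<bullet> (A *v x)"

section \<open>Matrix algebra and the Moore--Penrose inverse\<close>

lemma matrix_diff_rdistrib: "((A::real^'n^'m) - B) ** C = A ** C - B ** C"
  by (simp add: matrix_matrix_mult_def vec_eq_iff sum_subtractf algebra_simps)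

lemma matrix_diff_ldistrib: "(C::real^'n^'m) ** (A - B) = C ** A - C ** B"
  by (simp add: matrix_matrix_mult_def vec_eq_iff sum_subtractf algebra_simps)

lemma matrix_add_rdistrib: "((A::real^'n^'m) + B) ** C = A ** C + B ** C"
  by (simp add: matrix_matrix_mult_def vec_eq_iff sum.distrib algebra_simps)

lemma matrix_vector_mult_uminus: "(- (A::real^'n^'m)) *v x = - (A *v x)"
  by (simp add: matrix_vector_mult_def vec_eq_iff sum_negf)

lemma transpose_diff: "transpose ((A::real^'n^'m) - B) = transpose A - transpose B"
  by (simp add: transpose_def vec_eq_iff)

lemma inner_matrix_vector_transpose: "x \<bullet> ((B::real^'n^'m) *v y) = (transpose B *v x) \<bullet> y"
  using dot_lmul_matrix[of x B y] transpose_matrix_vector[of B x] by simp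

lemma inner_matrix_vector_symmetric:
  assumes "transpose (A::real^'n^'n) = A"
  shows "x \<bullet> (A *v y) = y \<bullet> (A *v x)"
  using inner_matrix_vector_transpose[of x A y] assms by (simp add: inner_commute)

definition penrose :: "real^'n^'m \<Rightarrow> real^'m^'n \<Rightarrow> bool" where
  "penrose A X \<longleftrightarrow> A ** X ** A = A \<and> X ** A ** X = X \<and>
                    transpose (A ** X) = A ** X \<and> transpose (X ** A) = X ** A"

lemma penrose_unique:
  assumes "penrose A X" "penrose A Y" shows "X = Y"
proof -
  have a: "A ** X ** A = A" "X ** A ** X = X" "transpose (A ** X) = A ** X" "transpose (X ** A) = X ** A"
    using assms(1) by (auto simp: penrose_def)
  have b: "A ** Y ** A = A" "Y ** A ** Y = Y" "transpose (A ** Y) = A ** Y" "transpose (Y ** A) = Y ** A"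
    using assms(2) by (auto simp: penrose_def)
  have "X = X ** (A ** X)" using a by (simp add: matrix_mul_assoc)
  also have "\<dots> = X ** transpose X ** transpose A"
    using a(3) by (metis matrix_transpose_mul matrix_mul_assoc)
  also have "transpose A = transpose A ** transpose Y ** transpose A"
    by (metis b(1) matrix_transpose_mul matrix_mul_assoc)
  also have "X ** transpose X ** (transpose A ** transpose Y ** transpose A)
     = X ** (transpose X ** transpose A) ** (transpose Y ** transpose A)"
    by (simp add: matrix_mul_assoc)
  also have "\<dots> = X ** (A ** X) ** (A ** Y)"
    by (metis a(3) b(3) matrix_transpose_mul)
  also have "\<dots> = (X ** A ** X) ** A ** Y" by (simp add: matrix_mul_assoc)
  finally have X: "X = X ** A ** Y" using a by (simp add: matrix_mul_assoc)
  have "Y = (Y ** A) ** Y" using b by (simp add: matrix_mul_assoc)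
  also have "\<dots> = transpose A ** transpose Y ** Y"
    using b(4) by (metis matrix_transpose_mul)
  also have "transpose A = transpose A ** transpose X ** transpose A"
    by (metis a(1) matrix_transpose_mul matrix_mul_assoc)
  also have "(transpose A ** transpose X ** transpose A) ** transpose Y ** Y
     = (transpose A ** transpose X) ** (transpose A ** transpose Y) ** Y"
    by (simp add: matrix_mul_assoc)
  also have "\<dots> = (X ** A) ** (Y ** A) ** Y"
    by (metis a(4) b(4) matrix_transpose_mul)
  also have "\<dots> = X ** A ** (Y ** A ** Y)" by (simp add: matrix_mul_assoc)
  finally have Y: "Y = X ** A ** Y" using b by simp
  show ?thesis using X Y by simp
qed

lemma orthogonal_projection_matrix_exists:
  fixes S :: "(real^'n) set"
  assumes "subspace S"
  obtains Q :: "real^'n^'n"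
  where "transpose Q = Q" "Q ** Q = Q" "\<And>x. Q *v x \<in> S" "\<And>x. x \<in> S \<Longrightarrow> Q *v x = x"
    "\<And>y. (\<And>s. s \<in> S \<Longrightarrow> y \<bullet> s = 0) \<Longrightarrow> Q *v y = 0"
proof -
  obtain B where BS: "B \<subseteq> S" and orth: "pairwise orthogonal B" and nrm: "\<And>x. x \<in> B \<Longrightarrow> norm x = 1"
    and ind: "independent B" and spB: "span B = S"
    using orthonormal_basis_subspace[OF assms] by metis
  have fB: "finite B" using ind by (rule finiteI_independent)
  define Q :: "real^'n^'n" where "Q = (\<chi> i j. \<Sum>b\<in>B. b$i * b$j)"
  have Qv: "Q *v x = (\<Sum>b\<in>B. (x \<bullet> b) *\<^sub>R b)" for x
    unfolding Q_def
    by (simp add: vec_eq_iff matrix_vector_mult_def inner_vec_def sum_distrib_left sum_distrib_right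
          sum_component mult.commute mult.left_commute) (subst sum.swap, simp add: mult_ac)
  have QS: "Q *v x \<in> S" for x
    unfolding Qv spB[symmetric] by (intro span_sum span_mul span_base) auto
  have Qfix: "Q *v x = x" if "x \<in> S" for x
    using orthonormal_basis_expand[OF orth nrm _ fB] spB that Qv by auto
  have "Q ** Q = Q"
    by (simp add: matrix_eq matrix_vector_mul_assoc[symmetric] QS Qfix)
  moreover have "transpose Q = Q"
    by (simp add: Q_def transpose_def vec_eq_iff mult.commute)
  moreover have "Q *v y = 0" if "\<And>s. s \<in> S \<Longrightarrow> y \<bullet> s = 0" for y
    using that BS by (auto simp: Qv intro!: sum.neutral)
  ultimately show ?thesis using that QS Qfix by blast
qed

text \<open>With Q the orthogonal projection onto the kernel, A + Q is invertible and
  inv (A + Q) - Q is the pseudo-inverse of A.\<close>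

lemma penrose_exists_symmetric:
  fixes A :: "real^'n^'n"
  assumes sym: "transpose A = A"
  shows "\<exists>X. penrose A X"
proof -
  have "subspace {x. A *v x = 0}"
    by (auto simp: subspace_def matrix_vector_right_distrib matrix_vector_mult_scaleR)
  then obtain Q :: "real^'n^'n" where QT: "transpose Q = Q" and QQ: "Q ** Q = Q"
    and QS: "\<And>x. A *v (Q *v x) = 0" and Qfix: "\<And>x. A *v x = 0 \<Longrightarrow> Q *v x = x"
    and perp: "\<And>y. (\<And>s. A *v s = 0 \<Longrightarrow> y \<bullet> s = 0) \<Longrightarrow> Q *v y = 0"
    by (rule orthogonal_projection_matrix_exists) auto
  have AQ: "A ** Q = 0"
    by (simp add: matrix_eq matrix_vector_mul_assoc[symmetric] QS)
  have "Q *v (A *v x) = 0" for x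
    by (rule perp) (metis inner_commute inner_matrix_vector_symmetric[OF sym] inner_zero_right)
  hence QA: "Q ** A = 0"
    by (simp add: matrix_eq matrix_vector_mul_assoc[symmetric])
  define B where "B = A + Q"
  have "x = 0" if "B *v x = 0" for x
  proof -
    have "Q *v x = Q *v (B *v x)"
      by (simp add: B_def matrix_vector_right_distrib matrix_vector_mult_add_rdistrib
          matrix_vector_mul_assoc QA QQ)
    hence Qx: "Q *v x = 0" using that by simp
    hence "A *v x = 0" using that by (simp add: B_def matrix_vector_mult_add_rdistrib)
    thus "x = 0" using Qfix Qx by metis
  qed
  then obtain C where CB: "C ** B = mat 1"
    using matrix_left_invertible_ker by blast
  hence BC: "B ** C = mat 1" using matrix_left_right_inverse by blast
  have BQ: "B ** Q = Q" by (simp add: B_def matrix_add_rdistrib AQ QQ)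
  have QB: "Q ** B = Q" by (simp add: B_def matrix_add_ldistrib QA QQ)
  have CQ: "C ** Q = Q" by (metis BQ CB matrix_mul_assoc matrix_mul_lid)
  have QC: "Q ** C = Q" by (metis QB BC matrix_mul_assoc matrix_mul_rid)
  have A: "A = B - Q" by (simp add: B_def)
  define X where "X = C - Q"
  have AX: "A ** X = mat 1 - Q"
    by (simp add: A X_def matrix_diff_rdistrib matrix_diff_ldistrib BC BQ QC QQ)
  have XA: "X ** A = mat 1 - Q"
    by (simp add: A X_def matrix_diff_rdistrib matrix_diff_ldistrib CB CQ QB QQ)
  have QX: "Q ** X = 0" by (simp add: X_def matrix_diff_ldistrib QC QQ)
  have "penrose A X"
    unfolding penrose_def
    by (simp add: AX XA QX QA matrix_diff_rdistrib transpose_diff QT)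
  thus ?thesis by blast
qed

lemma pinv_symmetric:
  fixes A :: "real^'n^'n"
  assumes sym: "transpose A = A"
  shows "penrose A (pinv A)" and "transpose (pinv A) = pinv A"
proof -
  obtain X where X: "penrose A X" using penrose_exists_symmetric[OF sym] by blast
  have "pinv A = X"
    unfolding pinv_def using X penrose_unique by (intro the_equality) (auto simp: penrose_def)
  with X show P: "penrose A (pinv A)" by simp
  let ?P = "pinv A"
  have p: "A ** ?P ** A = A" "?P ** A ** ?P = ?P" "transpose (A ** ?P) = A ** ?P"
      "transpose (?P ** A) = ?P ** A"
    using P by (auto simp: penrose_def)
  have "penrose A (transpose ?P)"
    unfolding penrose_def
    using arg_cong[OF p(1), of transpose] arg_cong[OF p(2), of transpose] p(3,4)
    by (simp add: matrix_transpose_mul sym matrix_mul_assoc)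
  thus "transpose (pinv A) = pinv A" using penrose_unique P by blast
qed

section \<open>Block vectors and block quadratic forms\<close>

definition vjoin :: "real^'q \<Rightarrow> real^'r \<Rightarrow> real^('q::finite+'r::finite)" where
  "vjoin a b = (\<chi> k. case k of Inl i \<Rightarrow> a$i | Inr i \<Rightarrow> b$i)"

definition vfst :: "real^('q::finite+'r::finite) \<Rightarrow> real^'q" where
  "vfst x = (\<chi> i. x $ Inl i)"

definition vsnd :: "real^('q::finite+'r::finite) \<Rightarrow> real^'r" where
  "vsnd x = (\<chi> i. x $ Inr i)"

lemma sum_UNIV_Plus:
  "(\<Sum>k\<in>(UNIV::('a::finite+'b::finite) set). f k) = (\<Sum>i\<in>UNIV. f (Inl i)) + (\<Sum>i\<in>UNIV. f (Inr i))"
  using sum.Plus[of "UNIV::'a set" "UNIV::'b set" f] by (simp add: UNIV_Plus_UNIV comp_def)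

lemma vjoin_vfst_vsnd: "vjoin (vfst x) (vsnd x) = x"
  by (simp add: vjoin_def vfst_def vsnd_def vec_eq_iff split: sum.split)

lemma vfst_vjoin [simp]: "vfst (vjoin a b) = a" and vsnd_vjoin [simp]: "vsnd (vjoin a b) = b"
  by (simp_all add: vjoin_def vfst_def vsnd_def vec_eq_iff)

lemma vjoin_zero [simp]: "vjoin 0 0 = 0"
  by (simp add: vjoin_def vec_eq_iff split: sum.split)

lemma vjoin_eq_0_iff: "vjoin a b = 0 \<longleftrightarrow> a = 0 \<and> b = 0"
  by (metis vfst_vjoin vsnd_vjoin vjoin_zero)

lemma vfst_add_scaleR: "vfst (x + t *\<^sub>R v) = vfst x + t *\<^sub>R vfst v"
  by (simp add: vfst_def vec_eq_iff)

lemma inner_vjoin: "vjoin a b \<bullet> vjoin c d = a \<bullet> c + b \<bullet> d"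
  unfolding inner_vec_def vjoin_def by (simp only: vec_lambda_beta sum_UNIV_Plus) simp

lemma matrix_vector_mult_vjoin:
  fixes N :: "real^('q::finite+'r::finite)^('q+'r)"
  shows "N *v vjoin a b = vjoin (blk11 N *v a + blk12 N *v b) (blk21 N *v a + blk22 N *v b)"
  unfolding vec_eq_iff
proof
  fix k
  show "(N *v vjoin a b) $ k = vjoin (blk11 N *v a + blk12 N *v b) (blk21 N *v a + blk22 N *v b) $ k"
    by (cases k) (simp_all only: matrix_vector_mult_def vjoin_def blk11_def blk12_def blk21_def
        blk22_def vec_lambda_beta sum_UNIV_Plus, simp_all)
qed

lemma qf_vjoin:
  fixes N :: "real^('q::finite+'r::finite)^('q+'r)"
  shows "qf N (vjoin a b) =
     qf (blk11 N) a + a \<bullet> (blk12 N *v b) + b \<bullet> (blk21 N *v a) + qf (blk22 N) b"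
  by (simp add: matrix_vector_mult_vjoin inner_vjoin inner_add_right)

lemma qf_vjoin_zero: "qf N (vjoin 0 b) = qf (blk22 N) b"
  by (simp add: qf_vjoin)

lemma stackI_mult: "stackI Z *v a = vjoin a (Z *v a)"
proof -
  have "(\<Sum>j\<in>UNIV. (if i = j then 1 else 0) * a$j) = a$i" for i
    by (subst sum.cong[OF refl, of _ _ "\<lambda>j. if i = j then a$j else 0"]) auto
  thus ?thesis
    unfolding vec_eq_iff
    by (auto simp: stackI_def vjoin_def matrix_vector_mult_def split: sum.split)
qed

lemma qf_congruence: "qf (transpose Z ** P ** Z) a = qf P (Z *v a)"
proof -
  have "(transpose Z ** P ** Z) *v a = transpose Z *v (P *v (Z *v a))"
    by (simp add: matrix_vector_mul_assoc matrix_mul_assoc)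
  thus ?thesis by (metis inner_matrix_vector_transpose transpose_transpose)
qed

lemma Zset_iff: "Z \<in> Zset P \<longleftrightarrow> (\<forall>a. 0 \<le> qf P (vjoin a (Z *v a)))"
  unfolding Zset_def psd_def qf_congruence stackI_mult by simp

lemma Zset_pos_iff: "Z \<in> Zset_pos P \<longleftrightarrow> (\<forall>a. a \<noteq> 0 \<longrightarrow> 0 < qf P (vjoin a (Z *v a)))"
  unfolding Zset_pos_def pd_def qf_congruence stackI_mult by simp

lemma quadratic_nonneg_discriminant:
  fixes c g s :: real
  assumes "0 \<le> s" and nonneg: "\<And>t. 0 \<le> c + 2 * t * g + t^2 * s"
  shows "g^2 \<le> s * c"
proof (cases "s = 0")
  case True
  have "g = 0"
  proof (rule ccontr)
    assume "g \<noteq> 0"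
    hence "c + 2 * (- (c + 1) / (2 * g)) * g + (- (c + 1) / (2 * g))^2 * s = -1"
      using True by (simp add: field_simps)
    thus False using nonneg[of "- (c + 1) / (2 * g)"] by linarith
  qed
  thus ?thesis using True by simp
next
  case False
  hence s: "0 < s" using assms(1) by simp
  have "0 \<le> c + 2 * (- g / s) * g + (- g / s)^2 * s" by (rule nonneg)
  also have "\<dots> = (s * c - g^2) / s" using s by (simp add: field_simps power2_eq_square)
  finally show ?thesis using s by (simp add: zero_le_divide_iff)
qed

lemma qf_add_scaleR:
  assumes "transpose (M::real^'n^'n) = M"
  shows "qf M (x + t *\<^sub>R y) = qf M x + 2 * t * (x \<bullet> (M *v y)) + t^2 * qf M y"
  using inner_matrix_vector_symmetric[OF assms, of y x]
  by (simp add: matrix_vector_right_distrib matrix_vector_mult_scaleR inner_add_left inner_add_right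
      algebra_simps power2_eq_square)

lemma psd_cauchy_schwarz:
  fixes S :: "real^'n^'n"
  assumes sym: "transpose S = S" and "psd S"
  shows "(a \<bullet> (S *v z))^2 \<le> qf S a * qf S z"
proof (rule quadratic_nonneg_discriminant)
  show "0 \<le> qf S a" using \<open>psd S\<close> by (simp add: psd_def)
  fix t
  have "0 \<le> qf S (z + t *\<^sub>R a)" using \<open>psd S\<close> by (simp add: psd_def)
  thus "0 \<le> qf S z + 2 * t * (a \<bullet> (S *v z)) + t^2 * qf S a"
    using inner_matrix_vector_symmetric[OF sym, of z a] by (simp add: qf_add_scaleR[OF sym])
qed

lemma nsd_qf_eq_0_imp_null:
  fixes D :: "real^'n^'n"
  assumes sym: "transpose D = D" and "nsd D" and "qf D b = 0"
  shows "D *v b = 0"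
proof -
  have sym': "transpose (- D) = - D" using sym by (simp add: transpose_def vec_eq_iff)
  have "psd (- D)" using \<open>nsd D\<close> by (simp add: psd_def nsd_def matrix_vector_mult_uminus)
  from psd_cauchy_schwarz[OF sym' this, of b "D *v b"]
  have "((D *v b) \<bullet> (D *v b))^2 \<le> 0"
    using \<open>qf D b = 0\<close> inner_matrix_vector_symmetric[OF sym, of b "D *v b"]
    by (simp add: matrix_vector_mult_uminus)
  thus ?thesis by simp
qed

lemma psd_absorbs_rank_one:
  fixes S :: "real^'n^'n"
  assumes sym: "transpose S = S" and psd: "psd S" and "a \<noteq> 0" and "d \<le> 0"
    and bound: "0 \<le> qf S a + d"
  obtains e where "e \<bullet> a = 1" and "\<And>z. 0 \<le> qf S z + (e \<bullet> z)^2 * d"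
proof (cases "qf S a = 0")
  case True
  hence "d = 0" using \<open>d \<le> 0\<close> bound by simp
  hence "0 \<le> qf S z + (((1 / (a \<bullet> a)) *\<^sub>R a) \<bullet> z)^2 * d" for z
    using psd by (simp add: psd_def)
  moreover have "((1 / (a \<bullet> a)) *\<^sub>R a) \<bullet> a = 1" using \<open>a \<noteq> 0\<close> by simp
  ultimately show ?thesis using that by blast
next
  case False
  define s where "s = qf S a"
  have s: "0 < s" using False psd by (simp add: s_def psd_def order_less_le)
  define e where "e = (1 / s) *\<^sub>R (S *v a)"
  have ez: "e \<bullet> z = (a \<bullet> (S *v z)) / s" for z
    using inner_matrix_vector_symmetric[OF sym, of z a] by (simp add: e_def inner_commute)
  have "0 \<le> qf S z + (e \<bullet> z)^2 * d" for z
  proof -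
    have "- qf S z \<le> - ((a \<bullet> (S *v z))^2 / s)"
      using psd_cauchy_schwarz[OF sym psd, of a z] s by (simp add: s_def divide_le_eq mult.commute)
    also have "\<dots> = (e \<bullet> z)^2 * (- s)"
      using s by (simp add: ez power_divide power2_eq_square)
    also have "\<dots> \<le> (e \<bullet> z)^2 * d"
      using bound by (intro mult_left_mono) (auto simp: s_def)
    finally show ?thesis by simp
  qed
  moreover have "e \<bullet> a = 1" using s by (simp add: ez s_def)
  ultimately show ?thesis using that by blast
qed

section \<open>The generalized Schur complement\<close>

lemma transpose_blocks:
  fixes N :: "real^('q::finite+'r::finite)^('q+'r)"
  assumes "sym_mat N"
  shows "transpose (blk12 N) = blk21 N" "transpose (blk22 N) = blk22 N" "transpose (blk11 N) = blk11 N"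
proof -
  have "N $ i $ j = N $ j $ i" for i j
    using arg_cong[OF assms[unfolded sym_mat_def], of "\<lambda>A. A $ j $ i"] by (simp add: transpose_def)
  thus "transpose (blk12 N) = blk21 N" "transpose (blk22 N) = blk22 N" "transpose (blk11 N) = blk11 N"
    by (simp_all add: transpose_def blk11_def blk12_def blk21_def blk22_def vec_eq_iff)
qed

lemma qf_block_completing_square:
  fixes A :: "real^'q^'q" and B :: "real^'r^'q" and C :: "real^'q^'r" and D P :: "real^'r^'r"
  assumes sD: "transpose D = D" and BC: "transpose B = C" and DPC: "D ** P ** C = C"
  shows "qf A a + a \<bullet> (B *v b) + b \<bullet> (C *v a) + qf D b =
         qf (A - B ** P ** C) a + qf D (b + P *v (C *v a))"
proof -
  define c where "c = C *v a"
  define u where "u = P *v c"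
  have Du: "D *v u = c" unfolding u_def c_def
    using DPC by (simp add: matrix_vector_mul_assoc matrix_mul_assoc)
  have aBb: "a \<bullet> (B *v b) = b \<bullet> c"
    using inner_matrix_vector_transpose[of a B b] BC by (simp add: c_def inner_commute)
  have aBPCa: "a \<bullet> ((B ** P ** C) *v a) = c \<bullet> u"
    using inner_matrix_vector_transpose[of a B u] BC
    by (simp add: c_def u_def matrix_vector_mul_assoc[symmetric] matrix_mul_assoc)
  have "u \<bullet> (D *v b) = b \<bullet> c"
    using inner_matrix_vector_symmetric[OF sD, of u b] Du by (simp add: inner_commute)
  hence "qf D (b + u) = qf D b + b \<bullet> c + b \<bullet> c + u \<bullet> c"
    using Du by (simp add: matrix_vector_right_distrib inner_add_left inner_add_right inner_commute)
  thus ?thesis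
    using aBb aBPCa by (simp add: c_def[symmetric] u_def[symmetric] matrix_vector_mult_diff_rdistrib
        inner_diff_right inner_commute)
qed

text \<open>The kernel condition of Pi_set says exactly that the columns of N21 lie in the range
  of N22, i.e. N22 (pinv N22) N21 = N21.\<close>

lemma Pi_set_range_inclusion:
  fixes N :: "real^('q::finite+'r::finite)^('q+'r)"
  assumes symN: "sym_mat N" and Pi: "N \<in> Pi_set"
  shows "blk22 N ** pinv (blk22 N) ** blk21 N = blk21 N"
proof -
  let ?B = "blk12 N" and ?D = "blk22 N" and ?P = "pinv (blk22 N)"
  note sB = transpose_blocks[OF symN]
  have DPD: "?D ** ?P ** ?D = ?D" and PT: "transpose ?P = ?P"
    using pinv_symmetric[OF sB(2)] by (auto simp: penrose_def)
  have ker: "\<And>x. ?D *v x = 0 \<Longrightarrow> ?B *v x = 0" using Pi by (auto simp: Pi_set_def)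
  have "?B = ?B ** ?P ** ?D"
    unfolding matrix_eq
  proof
    fix y
    have "?D *v (y - (?P ** ?D) *v y) = 0"
      using DPD by (simp add: matrix_vector_mult_diff_distrib matrix_vector_mul_assoc matrix_mul_assoc)
    hence "?B *v (y - (?P ** ?D) *v y) = 0" by (rule ker)
    thus "?B *v y = ?B ** ?P ** ?D *v y"
      by (simp add: matrix_vector_mult_diff_distrib matrix_vector_mul_assoc matrix_mul_assoc)
  qed
  hence "transpose ?B = transpose (?B ** ?P ** ?D)" by simp
  thus ?thesis using sB PT by (simp add: matrix_transpose_mul matrix_mul_assoc)
qed

lemma schur_symmetric:
  assumes "sym_mat N"
  shows "transpose (schur N) = schur N"
proof -
  note sB = transpose_blocks[OF assms]
  have "transpose (blk21 N) = blk12 N" using sB(1) by (metis transpose_transpose)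
  thus ?thesis
    using sB pinv_symmetric(2)[OF sB(2)]
    by (simp add: schur_def transpose_diff matrix_transpose_mul matrix_mul_assoc)
qed

lemma Pi_set_qf_schur:
  fixes N :: "real^('q::finite+'r::finite)^('q+'r)"
  assumes "sym_mat N" and "N \<in> Pi_set"
  shows "qf N (vjoin x y) =
    qf (schur N) x + qf (blk22 N) (y + pinv (blk22 N) *v (blk21 N *v x))"
  unfolding qf_vjoin schur_def
  using transpose_blocks[OF assms(1)] Pi_set_range_inclusion[OF assms]
  by (intro qf_block_completing_square)

section \<open>Parametrizing the cone of N by the matrices Z\<close>

definition outer_prod :: "real^'m \<Rightarrow> real^'n \<Rightarrow> real^'n^'m" where
  "outer_prod w e = (\<chi> i j. w$i * e$j)"

lemma outer_prod_mult: "outer_prod w e *v z = (e \<bullet> z) *\<^sub>R w"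
  by (simp add: outer_prod_def vec_eq_iff matrix_vector_mult_def inner_vec_def sum_distrib_left mult_ac)

text \<open>With Z z = (e \<bullet> z) w - (pinv N22) N21 z the lower residual in Pi_set_qf_schur is the
  multiple (e \<bullet> z) w of the residual w at a, so the form along the graph of Z becomes
  qf (schur N) z + (e \<bullet> z)^2 qf N22 w, which psd_absorbs_rank_one keeps nonnegative.\<close>

lemma Zset_interpolation:
  fixes N :: "real^('q::finite+'r::finite)^('q+'r)"
  assumes symN: "sym_mat N" and Pi: "N \<in> Pi_set" and "a \<noteq> 0" and q: "0 \<le> qf N (vjoin a b)"
  obtains Z where "Z \<in> Zset N" and "Z *v a = b"
proof -
  let ?C = "blk21 N" and ?D = "blk22 N" and ?P = "pinv (blk22 N)" and ?S = "schur N"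
  note schur = Pi_set_qf_schur[OF symN Pi]
  define w where "w = b + ?P *v (?C *v a)"
  have "psd ?S" and "qf ?D w \<le> 0" using Pi by (auto simp: Pi_set_def nsd_def)
  moreover have "0 \<le> qf ?S a + qf ?D w" using q by (simp add: schur w_def)
  ultimately obtain e where ea: "e \<bullet> a = 1" and nonneg: "\<And>z. 0 \<le> qf ?S z + (e \<bullet> z)^2 * qf ?D w"
    using psd_absorbs_rank_one[OF schur_symmetric[OF symN]] \<open>a \<noteq> 0\<close> by metis
  define Z where "Z = outer_prod w e - ?P ** ?C"
  have Zz: "Z *v z = (e \<bullet> z) *\<^sub>R w - ?P *v (?C *v z)" for z
    by (simp add: Z_def outer_prod_mult matrix_vector_mult_diff_rdistrib matrix_vector_mul_assoc)
  have "Z \<in> Zset N"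
    unfolding Zset_iff
    using nonneg by (simp add: schur Zz matrix_vector_mult_scaleR power2_eq_square mult.assoc)
  moreover have "Z *v a = b" using ea by (simp add: Zz w_def)
  ultimately show ?thesis by (rule that)
qed

section \<open>The S-lemma for the matrix cone of N\<close>

lemma nonneg_if_quadratic_nonneg_at_right:
  fixes a b c :: real
  assumes "\<And>t. 0 < t \<Longrightarrow> 0 \<le> a + 2 * t * b + t^2 * c"
  shows "0 \<le> a"
proof (rule tendsto_lowerbound)
  have "((\<lambda>t. a + 2 * t * b + t^2 * c) \<longlongrightarrow> a + 2 * 0 * b + 0^2 * c) (at_right 0)"
    by (intro tendsto_intros)
  thus "((\<lambda>t. a + 2 * t * b + t^2 * c) \<longlongrightarrow> a) (at_right 0)" by simp
  show "eventually (\<lambda>t. 0 \<le> a + 2 * t * b + t^2 * c) (at_right (0::real))"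
    using eventually_at_right_less by (rule eventually_mono) (rule assms)
qed (rule trivial_limit_at_right_real)

lemma Zset_graph_through:
  fixes N :: "real^('q::finite+'r::finite)^('q+'r)"
  assumes "sym_mat N" and "N \<in> Pi_set" and "vfst x \<noteq> 0" and "0 \<le> qf N x"
  obtains Z where "Z \<in> Zset N" and "x = vjoin (vfst x) (Z *v vfst x)"
  using Zset_interpolation[OF assms(1-3), of "vsnd x"] assms(4)
  by (metis vjoin_vfst_vsnd)

lemma qf_nonneg_if_Zset_subset_vfst_nonzero:
  fixes M N :: "real^('q::finite+'r::finite)^('q+'r)"
  assumes "sym_mat N" and "N \<in> Pi_set" and "Zset N \<subseteq> Zset M"
    and "vfst x \<noteq> 0" and "0 \<le> qf N x"
  shows "0 \<le> qf M x"
proof -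
  obtain Z where "Z \<in> Zset M" and "x = vjoin (vfst x) (Z *v vfst x)"
    using Zset_graph_through[OF assms(1,2,4,5)] assms(3) by blast
  thus ?thesis unfolding Zset_iff by metis
qed

lemma qf_pos_if_Zset_subset_Zset_pos_vfst_nonzero:
  fixes M N :: "real^('q::finite+'r::finite)^('q+'r)"
  assumes "sym_mat N" and "N \<in> Pi_set" and "Zset N \<subseteq> Zset_pos M"
    and "vfst x \<noteq> 0" and "0 \<le> qf N x"
  shows "0 < qf M x"
proof -
  obtain Z where "Z \<in> Zset_pos M" and "x = vjoin (vfst x) (Z *v vfst x)"
    using Zset_graph_through[OF assms(1,2,4,5)] assms(3) by blast
  thus ?thesis unfolding Zset_pos_iff using \<open>vfst x \<noteq> 0\<close> by metis
qed

lemma Pi_set_null_if_vfst_zero: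
  fixes N :: "real^('q::finite+'r::finite)^('q+'r)"
  assumes symN: "sym_mat N" and Pi: "N \<in> Pi_set" and "vfst x = 0" and "0 \<le> qf N x"
  shows "N *v x = 0"
proof -
  define y where "y = vsnd x"
  have x: "x = vjoin 0 y" using vjoin_vfst_vsnd[of x] \<open>vfst x = 0\<close> by (simp add: y_def)
  have nsd: "nsd (blk22 N)" and ker: "\<And>z. blk22 N *v z = 0 \<Longrightarrow> blk12 N *v z = 0"
    using Pi by (auto simp: Pi_set_def)
  have "qf (blk22 N) y = 0"
    using \<open>0 \<le> qf N x\<close> nsd unfolding x qf_vjoin_zero nsd_def by (meson order_antisym)
  hence "blk22 N *v y = 0" by (rule nsd_qf_eq_0_imp_null[OF transpose_blocks(2)[OF symN] nsd])
  with ker show ?thesis by (simp add: x matrix_vector_mult_vjoin)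
qed

lemma has_pos_eigenvalue_obtains_positive_vector:
  fixes N :: "real^('q::finite+'r::finite)^('q+'r)"
  assumes "has_pos_eigenvalue N" and nsd: "nsd (blk22 N)"
  obtains v where "vfst v \<noteq> 0" and "0 < qf N v"
proof -
  obtain c v where "0 < c" "v \<noteq> 0" "N *v v = c *\<^sub>R v"
    using assms(1) by (auto simp: has_pos_eigenvalue_def)
  hence pos: "0 < qf N v" by simp
  moreover have "vfst v \<noteq> 0"
  proof
    assume "vfst v = 0"
    hence "qf N v = qf (blk22 N) (vsnd v)" by (metis qf_vjoin_zero vjoin_vfst_vsnd)
    thus False using pos nsd by (simp add: nsd_def not_less[symmetric])
  qed
  ultimately show ?thesis using that by blast
qed

lemma qf_nonneg_if_Zset_subset:
  fixes M N :: "real^('q::finite+'r::finite)^('q+'r)"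
  assumes symM: "sym_mat M" and symN: "sym_mat N" and Pi: "N \<in> Pi_set"
    and eig: "has_pos_eigenvalue N" and sub: "Zset N \<subseteq> Zset M" and qx: "0 \<le> qf N x"
  shows "0 \<le> qf M x"
proof (cases "vfst x = 0")
  case False
  with qf_nonneg_if_Zset_subset_vfst_nonzero[OF symN Pi sub] qx show ?thesis by blast
next
  case True
  have tM: "transpose M = M" and tN: "transpose N = N"
    using symM symN by (auto simp: sym_mat_def)
  have Nx: "N *v x = 0" by (rule Pi_set_null_if_vfst_zero[OF symN Pi True qx])
  obtain v where v: "vfst v \<noteq> 0" "0 < qf N v"
    using has_pos_eigenvalue_obtains_positive_vector[OF eig] Pi by (auto simp: Pi_set_def)
  show ?thesis
  proof (rule nonneg_if_quadratic_nonneg_at_right)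
    fix t :: real assume "0 < t"
    have "qf N (x + t *\<^sub>R v) = t^2 * qf N v"
      using qf_add_scaleR[OF tN] inner_matrix_vector_symmetric[OF tN, of x v] Nx by simp
    hence "0 \<le> qf N (x + t *\<^sub>R v)" using v by simp
    moreover have "vfst (x + t *\<^sub>R v) \<noteq> 0" using True v \<open>0 < t\<close> by (simp add: vfst_add_scaleR)
    ultimately have "0 \<le> qf M (x + t *\<^sub>R v)"
      using qf_nonneg_if_Zset_subset_vfst_nonzero[OF symN Pi sub] by blast
    thus "0 \<le> qf M x + 2 * t * (x \<bullet> (M *v v)) + t^2 * qf M v"
      by (simp add: qf_add_scaleR[OF tM])
  qed
qed

lemma Zset_subset_iff_qf_nonneg_imp:
  fixes M N :: "real^('q::finite+'r::finite)^('q+'r)"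
  assumes "sym_mat M" and "sym_mat N" and "N \<in> Pi_set" and "has_pos_eigenvalue N"
  shows "Zset N \<subseteq> Zset M \<longleftrightarrow> (\<forall>x. 0 \<le> qf N x \<longrightarrow> 0 \<le> qf M x)"
  using qf_nonneg_if_Zset_subset[OF assms] by (auto simp: Zset_iff)

lemma Zset_subset_Zset_pos_iff:
  fixes M N :: "real^('q::finite+'r::finite)^('q+'r)"
  assumes symN: "sym_mat N" and Pi: "N \<in> Pi_set" and nd: "nd (blk22 N)"
  shows "Zset N \<subseteq> Zset_pos M \<longleftrightarrow> (\<forall>x. x \<noteq> 0 \<and> 0 \<le> qf N x \<longrightarrow> 0 < qf M x)"
proof
  assume sub: "Zset N \<subseteq> Zset_pos M"
  show "\<forall>x. x \<noteq> 0 \<and> 0 \<le> qf N x \<longrightarrow> 0 < qf M x"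
  proof (intro allI impI, elim conjE)
    fix x assume "x \<noteq> 0" and qx: "0 \<le> qf N x"
    have "vfst x \<noteq> 0"
    proof
      assume "vfst x = 0"
      hence "vsnd x \<noteq> 0" and "qf N x = qf (blk22 N) (vsnd x)"
        using \<open>x \<noteq> 0\<close> by (metis vjoin_vfst_vsnd vjoin_zero qf_vjoin_zero)+
      thus False using nd qx by (simp add: nd_def not_le[symmetric])
    qed
    with qf_pos_if_Zset_subset_Zset_pos_vfst_nonzero[OF symN Pi sub] qx show "0 < qf M x" by blast
  qed
next
  assume "\<forall>x. x \<noteq> 0 \<and> 0 \<le> qf N x \<longrightarrow> 0 < qf M x"
  thus "Zset N \<subseteq> Zset_pos M" by (auto simp: Zset_iff Zset_pos_iff vjoin_eq_0_iff)
qed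

theorem mainTheorem7:
  fixes M N :: "real^('q::finite + 'r::finite)^('q + 'r)"
  assumes "sym_mat M" and "sym_mat N" and "N \<in> Pi_set"
  shows "(has_pos_eigenvalue N \<longrightarrow>
            (Zset N \<subseteq> Zset M \<longleftrightarrow> (\<forall>x. 0 \<le> x \<bullet> (N *v x) \<longrightarrow> 0 \<le> x \<bullet> (M *v x))))
       \<and> (nd (blk22 N) \<longrightarrow>
            (Zset N \<subseteq> Zset_pos M \<longleftrightarrow>
               (\<forall>x. x \<noteq> 0 \<and> 0 \<le> x \<bullet> (N *v x) \<longrightarrow> 0 < x \<bullet> (M *v x))))"
  using Zset_subset_iff_qf_nonneg_imp[OF assms] Zset_subset_Zset_pos_iff[OF assms(2,3)] by blast

end
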